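(* Let $\mathfrak{g}$ be a finite-dimensional Leibniz algebra with free presentation $0\to\mathfrak{r}\to\mathfrak{f}\xrightarrow{\rho}\mathfrak{g}\to0$, let $\mathfrak{n}$ be a two-sided ideal of $\mathfrak{g}$, and let $\mathfrak{s}$ be a two-sided ideal of $\mathfrak{f}$ with $\rho(\mathfrak{s})=\mathfrak{n}$. Then $$\dim\mathcal{M}^{\mathrm{Lie}}(\mathfrak{g}/\mathfrak{n})+\dim\frac{\mathfrak{r}\cap[\mathfrak{f},\mathfrak{s}]_{\mathrm{Lie}}}{[\mathfrak{f},\mathfrak{r}]_{\mathrm{Lie}}\cap[\mathfrak{f},\mathfrak{s}]_{\mathrm{Lie}}}=\dim\mathcal{M}^{\mathrm{Lie}}(\mathfrak{g})+\dim\frac{\mathfrak{n}\cap[\mathfrak{g},\mathfrak{g}]_{\mathrm{Lie}}}{[\mathfrak{g},\mathfrak{n}]_{\mathrm{Lie}}}.$$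
   Context: Fix a field $\mathbb{K}$ with $\frac12\in\mathbb{K}$. A Leibniz algebra is a $\mathbb{K}$-vector space with a bilinear bracket satisfying $[x,[y,z]]=[[x,y],z]-[[x,z],y]$. For two-sided ideals $\mathfrak{m},\mathfrak{n}$, $[\mathfrak{m},\mathfrak{n}]_{\mathrm{Lie}}$ is the subspace spanned by all $[m,n]+[n,m]$. A free presentation is $0\to\mathfrak{r}\to\mathfrak{f}\to\mathfrak{g}\to0$ with $\mathfrak{f}$ free Leibniz. The Schur $\mathrm{Lie}$-multiplier is $\mathcal{M}^{\mathrm{Lie}}(\mathfrak{g})=\frac{\mathfrak{r}\cap[\mathfrak{f},\mathfrak{f}]_{\mathrm{Lie}}}{[\mathfrak{f},\mathfrak{r}]_{\mathrm{Lie}}}$, independent of the presentation up to isomorphism. *)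

theory Defs
  imports Complex_Main
begin

text \<open>Leibniz algebras (right Leibniz identity as in the paper) over a field 'k,
  carried by a whole type 'a with a scalar multiplication sc and bracket br.\<close>

definition leibniz_algebra ::
  "('k::field \<Rightarrow> 'a::ab_group_add \<Rightarrow> 'a) \<Rightarrow> ('a \<Rightarrow> 'a \<Rightarrow> 'a) \<Rightarrow> bool" where
  "leibniz_algebra sc br \<longleftrightarrow>
     vector_space sc \<and>
     (\<forall>x y z. br (x + y) z = br x z + br y z) \<and>
     (\<forall>x y z. br x (y + z) = br x y + br x z) \<and>
     (\<forall>a x y. br (sc a x) y = sc a (br x y)) \<and>
     (\<forall>a x y. br x (sc a y) = sc a (br x y)) \<and>
     (\<forall>x y z. br x (br y z) = br (br x y) z - br (br x z) y)"

definition two_sided_ideal ::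
  "('k::field \<Rightarrow> 'a::ab_group_add \<Rightarrow> 'a) \<Rightarrow> ('a \<Rightarrow> 'a \<Rightarrow> 'a) \<Rightarrow> 'a set \<Rightarrow> bool" where
  "two_sided_ideal sc br I \<longleftrightarrow>
     module.subspace sc I \<and> (\<forall>x\<in>I. \<forall>y. br x y \<in> I \<and> br y x \<in> I)"

definition lie_comm ::
  "('k::field \<Rightarrow> 'a::ab_group_add \<Rightarrow> 'a) \<Rightarrow> ('a \<Rightarrow> 'a \<Rightarrow> 'a) \<Rightarrow> 'a set \<Rightarrow> 'a set \<Rightarrow> 'a set" where
  "lie_comm sc br M N = module.span sc {br m n + br n m | m n. m \<in> M \<and> n \<in> N}"

definition leibniz_hom ::
  "('k::field \<Rightarrow> 'a::ab_group_add \<Rightarrow> 'a) \<Rightarrow> ('a \<Rightarrow> 'a \<Rightarrow> 'a) \<Rightarrow>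
   ('k \<Rightarrow> 'b::ab_group_add \<Rightarrow> 'b) \<Rightarrow> ('b \<Rightarrow> 'b \<Rightarrow> 'b) \<Rightarrow> ('a \<Rightarrow> 'b) \<Rightarrow> bool" where
  "leibniz_hom sc1 br1 sc2 br2 h \<longleftrightarrow>
     Vector_Spaces.linear sc1 sc2 h \<and> (\<forall>x y. h (br1 x y) = br2 (h x) (h y))"

definition left_normed :: "('a \<Rightarrow> 'a \<Rightarrow> 'a) \<Rightarrow> 'a list \<Rightarrow> 'a" where
  "left_normed br w = foldl br (hd w) (tl w)"

text \<open>Free (right) Leibniz algebra on X: the left-normed monomials in the letters of X
  (words of length >= 1) are pairwise distinct and form a basis (Loday--Pirashvili).\<close>
definition free_leibniz_on ::
  "('k::field \<Rightarrow> 'a::ab_group_add \<Rightarrow> 'a) \<Rightarrow> ('a \<Rightarrow> 'a \<Rightarrow> 'a) \<Rightarrow> 'a set \<Rightarrow> bool" where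
  "free_leibniz_on sc br X \<longleftrightarrow>
     leibniz_algebra sc br \<and>
     (let W = {w. w \<noteq> [] \<and> set w \<subseteq> X} in
        inj_on (left_normed br) W \<and>
        \<not> module.dependent sc (left_normed br ` W) \<and>
        module.span sc (left_normed br ` W) = UNIV)"

definition free_leibniz ::
  "('k::field \<Rightarrow> 'a::ab_group_add \<Rightarrow> 'a) \<Rightarrow> ('a \<Rightarrow> 'a \<Rightarrow> 'a) \<Rightarrow> bool" where
  "free_leibniz sc br \<longleftrightarrow> (\<exists>X. free_leibniz_on sc br X)"

definition fin_dim :: "('k::field \<Rightarrow> 'a::ab_group_add \<Rightarrow> 'a) \<Rightarrow> bool" where
  "fin_dim sc \<longleftrightarrow> (\<exists>B. finite B \<and> module.span sc B = UNIV)"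

text \<open>dim (A / B) for subspaces (intended B \<subseteq> A; in general this is dim A/(A \<inter> B)),
  computed as the dimension of a complement of A \<inter> B in A.\<close>
definition quot_dim ::
  "('k::field \<Rightarrow> 'a::ab_group_add \<Rightarrow> 'a) \<Rightarrow> 'a set \<Rightarrow> 'a set \<Rightarrow> nat" where
  "quot_dim sc A B = vector_space.dim sc
     (SOME C. module.subspace sc C \<and> C \<subseteq> A \<and> C \<inter> B = {0} \<and>
              A \<subseteq> {c + b | c b. c \<in> C \<and> b \<in> A \<inter> B})"

text \<open>dim M^Lie computed from a free presentation 0 -> r -> f -> h -> 0 with kernel r:
  dim (r \<inter> [f,f]_Lie) / [f,r]_Lie.\<close>
definition schur_lie_dim ::
  "('k::field \<Rightarrow> 'a::ab_group_add \<Rightarrow> 'a) \<Rightarrow> ('a \<Rightarrow> 'a \<Rightarrow> 'a) \<Rightarrow> 'a set \<Rightarrow> nat" where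
  "schur_lie_dim sc br r =
     quot_dim sc (r \<inter> lie_comm sc br UNIV UNIV) (lie_comm sc br UNIV r)"

end

(*
  Write r = ker \<rho> and t = \<rho>\<^sup>-\<^sup>1(n), so that f -> g/n is a free presentation with kernel t.
  All quotients involved are subquotients of [f,f]_Lie / [f,r]_Lie, which is finite-dimensional
  because g is. With K = (r \<inter> [f,f]_Lie) + [f,t]_Lie the chains
    [f,t] \<subseteq> K \<subseteq> t \<inter> [f,f]   and   [f,r] \<subseteq> r \<inter> [f,t] \<subseteq> r \<inter> [f,f]
  split M^Lie(g/n) and M^Lie(g) into two pieces each. The map \<rho> identifies (t \<inter> [f,f]) / K with
  (n \<inter> [g,g]) / [g,n]; the second isomorphism theorem identifies K / [f,t] with
  (r \<inter> [f,f]) / (r \<inter> [f,t]); and r \<inter> [f,t] = (r \<inter> [f,s]) + [f,r] identifies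
  (r \<inter> [f,t]) / [f,r] with (r \<inter> [f,s]) / ([f,r] \<inter> [f,s]). Since f is infinite-dimensional,
  the dimension of a quotient A / B is handled as the dimension of a complement of A \<inter> B in A.
*)

theory Submission
  imports Defs
begin

definition is_complement ::
  "('k::field \<Rightarrow> 'a::ab_group_add \<Rightarrow> 'a) \<Rightarrow> 'a set \<Rightarrow> 'a set \<Rightarrow> 'a set \<Rightarrow> bool" where
  "is_complement sc A B C \<longleftrightarrow> module.subspace sc C \<and> C \<subseteq> A \<and> C \<inter> B = {0} \<and>
     A \<subseteq> {c + b | c b. c \<in> C \<and> b \<in> A \<inter> B}"

definition fin_codim :: "('k::field \<Rightarrow> 'a::ab_group_add \<Rightarrow> 'a) \<Rightarrow> 'a set \<Rightarrow> 'a set \<Rightarrow> bool" where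
  "fin_codim sc A B \<longleftrightarrow> (\<exists>S. finite S \<and> A \<subseteq> {x + y | x y. x \<in> module.span sc S \<and> y \<in> B})"

lemma quot_dim_eq_dim_some_complement:
  "quot_dim sc A B = vector_space.dim sc (SOME C. is_complement sc A B C)"
  unfolding quot_dim_def is_complement_def by simp

lemma quot_dim_Int: "quot_dim sc A (A \<inter> B) = quot_dim sc A B"
proof -
  have "is_complement sc A (A \<inter> B) = is_complement sc A B"
    unfolding is_complement_def by (intro ext) auto
  then show ?thesis unfolding quot_dim_eq_dim_some_complement by simp
qed

lemma sumsI: "a = x + y \<Longrightarrow> x \<in> X \<Longrightarrow> y \<in> Y \<Longrightarrow> a \<in> {x + y | x y. x \<in> X \<and> y \<in> Y}"
  by blast

lemma sumsE:
  assumes "a \<in> {x + y | x y. x \<in> X \<and> y \<in> Y}"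
  obtains x y where "a = x + y" "x \<in> X" "y \<in> Y"
  using assms by blast

lemma fin_codim_mono:
  assumes "fin_codim sc A B" and "A' \<subseteq> A" and "B \<subseteq> B'"
  shows "fin_codim sc A' B'"
proof -
  obtain S where "finite S" and "A \<subseteq> {x + y | x y. x \<in> module.span sc S \<and> y \<in> B}"
    using assms(1) unfolding fin_codim_def by blast
  moreover have "{x + y | x y. x \<in> module.span sc S \<and> y \<in> B}
      \<subseteq> {x + y | x y. x \<in> module.span sc S \<and> y \<in> B'}"
    using assms(3) by blast
  ultimately show ?thesis
    using assms(2) unfolding fin_codim_def by (meson order_trans)
qed

context vector_space
begin

lemma complement_exists:
  assumes A: "subspace A" and B: "subspace B"
  obtains C where "is_complement scale A B C"
proof -
  interpret P: vector_space_pair scale scale ..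
  obtain S where S: "S \<subseteq> A \<inter> B" "independent S" "A \<inter> B \<subseteq> span S"
    by (metis basis_exists)
  obtain T where T: "S \<subseteq> T" "T \<subseteq> A" "independent T" "A \<subseteq> span T"
    using maximal_independent_subset_extend[of S A] S(1,2) by blast
  have span_S: "span S = A \<inter> B"
    using span_minimal[OF S(1) subspace_inter[OF A B]] S(3) by blast
  define C where "C = span (T - S)"
  text \<open>A projection killing \<open>S\<close> and fixing \<open>T - S\<close> separates \<open>C\<close> from \<open>A \<inter> B\<close>.\<close>
  obtain p where p: "Vector_Spaces.linear scale scale p" "\<forall>x\<in>T. p x = (if x \<in> S then 0 else x)"
    using P.linear_independent_extend[OF T(3), where f="\<lambda>x. if x \<in> S then 0 else x"] by blast
  have p_C: "p x = x" if "x \<in> C" for x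
    using P.linear_eq_on[OF p(1) linear_id, of x "T - S"] that p(2) unfolding C_def by simp
  have p_S: "p x = 0" if "x \<in> span S" for x
    using P.linear_eq_on[OF p(1) P.linear_zero, of x S] that p(2) T(1) by (simp add: subset_iff)
  have C_A: "C \<subseteq> A"
    unfolding C_def using T(2) by (intro span_minimal[OF _ A]) auto
  have "C \<inter> B \<subseteq> {0}"
  proof
    fix x assume x: "x \<in> C \<inter> B"
    then have "x \<in> span S" using C_A span_S by auto
    then show "x \<in> {0}" using p_C p_S x by force
  qed
  then have C_B: "C \<inter> B = {0}"
    using span_zero[of "T - S"] subspace_0[OF B] unfolding C_def by auto
  have "span T = {x + y | x y. x \<in> C \<and> y \<in> A \<inter> B}"
    using span_Un[of "T - S" S] T(1) unfolding C_def span_S[symmetric] by (simp add: Un_absorb2)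
  then have "is_complement scale A B C"
    using T(4) C_A C_B unfolding is_complement_def C_def by simp
  then show ?thesis ..
qed

lemma linear_embedding_modulo:
  assumes B: "subspace B" and C: "subspace C" and D: "subspace D"
    and C_B: "C \<inter> B = {0}" and C_DB: "C \<subseteq> {d + b | d b. d \<in> D \<and> b \<in> B}"
  obtains G where "Vector_Spaces.linear scale scale G" "inj_on G C" "G ` C \<subseteq> D"
    and "\<forall>x\<in>C. x - G x \<in> B"
proof -
  interpret P: vector_space_pair scale scale ..
  obtain S where S: "S \<subseteq> C" "independent S" "C \<subseteq> span S"
    by (metis basis_exists)
  have "\<forall>x\<in>S. \<exists>d. d \<in> D \<and> x - d \<in> B"
  proof
    fix x assume "x \<in> S"
    then obtain d b where "x = d + b" "d \<in> D" "b \<in> B" using S(1) C_DB by blast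
    then show "\<exists>d. d \<in> D \<and> x - d \<in> B" by (metis add_diff_cancel_left')
  qed
  then obtain g where g: "\<forall>x\<in>S. g x \<in> D \<and> x - g x \<in> B"
    by metis
  obtain G where G: "Vector_Spaces.linear scale scale G" "\<forall>x\<in>S. G x = g x"
    using P.linear_independent_extend[OF S(2), where f=g] by blast
  let ?W = "{x. G x \<in> D} \<inter> {x. x - G x \<in> B}"
  have "subspace ?W"
    using P.linear_subspace_linear_preimage[OF G(1) D]
      P.linear_subspace_linear_preimage[OF P.linear_compose_sub[OF linear_id G(1)] B]
    by (intro subspace_inter) (simp_all add: id_def)
  moreover have "S \<subseteq> ?W"
    using g G(2) by auto
  ultimately have C_W: "C \<subseteq> ?W"
    using S(3) span_minimal[of S ?W] by blast
  have "inj_on G C"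
    unfolding P.linear_inj_on_iff_eq_0[OF G(1) C]
  proof (intro ballI impI)
    fix x assume "x \<in> C" "G x = 0"
    then have "x \<in> C \<inter> B" using C_W by auto
    then show "x = 0" using C_B by blast
  qed
  then show ?thesis
    using that G(1) C_W by auto
qed

end

context vector_space_pair
begin

lemma dim_image_inj_on:
  assumes h: "Vector_Spaces.linear s1 s2 h" and C: "vs1.subspace C" and inj: "inj_on h C"
  shows "vs2.dim (h ` C) = vs1.dim C"
proof -
  obtain S where S: "S \<subseteq> C" "vs1.independent S" "C \<subseteq> vs1.span S" "card S = vs1.dim C"
    by (rule vs1.basis_exists)
  have span_S: "vs1.span S = C"
    using vs1.span_subspace[OF S(1) S(3) C] .
  have "vs2.independent (h ` S)"
    using linear_independent_injective_image[OF h S(2)] inj span_S by simp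
  moreover have "vs2.span (h ` S) = vs2.span (h ` C)"
    using linear_span_image[OF h, of S] span_S vs2.span_span by metis
  ultimately have "vs2.dim (h ` C) = card (h ` S)"
    using vs2.dim_eq_card by blast
  also have "\<dots> = card S"
    using card_image inj_on_subset[OF inj S(1)] by blast
  finally show ?thesis using S(4) by simp
qed

end

context vector_space
begin

lemma complement_dim_unique:
  assumes B: "subspace B" and C: "is_complement scale A B C" and D: "is_complement scale A B D"
  shows "dim C = dim D"
proof -
  interpret P: vector_space_pair scale scale ..
  have C': "subspace C" "C \<subseteq> A" "C \<inter> B = {0}" "A \<subseteq> {c + b | c b. c \<in> C \<and> b \<in> A \<inter> B}"
    using C unfolding is_complement_def by simp_all
  have D': "subspace D" "D \<subseteq> A" "D \<inter> B = {0}" "A \<subseteq> {d + b | d b. d \<in> D \<and> b \<in> A \<inter> B}"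
    using D unfolding is_complement_def by simp_all
  have "C \<subseteq> {d + b | d b. d \<in> D \<and> b \<in> B}"
    using C'(2) D'(4) by blast
  then obtain G where G: "Vector_Spaces.linear scale scale G" "inj_on G C" "G ` C \<subseteq> D"
    and G_B: "\<forall>x\<in>C. x - G x \<in> B"
    using linear_embedding_modulo[OF B C'(1) D'(1) C'(3)] by blast
  have "D \<subseteq> G ` C"
  proof
    fix d assume d: "d \<in> D"
    then obtain c b where cb: "d = c + b" "c \<in> C" "b \<in> B"
      using D'(2) C'(4) by blast
    have "G c - d = - (c - G c) - b"
      using cb(1) by (simp add: algebra_simps)
    then have "G c - d \<in> B"
      using G_B cb(2,3) subspace_diff[OF B] subspace_neg[OF B] by metis
    moreover have "G c - d \<in> D"
      using G(3) cb(2) d subspace_diff[OF D'(1)] by blast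
    ultimately have "G c - d = 0" using D'(3) by blast
    then have "d = G c" by simp
    then show "d \<in> G ` C" using cb(2) by simp
  qed
  then have "G ` C = D" using G(3) by blast
  then show ?thesis
    using P.dim_image_inj_on[OF G(1) C'(1) G(2)] by simp
qed

lemma quot_dim_complement:
  assumes "subspace B" and C: "is_complement scale A B C"
  shows "quot_dim scale A B = dim C"
  unfolding quot_dim_eq_dim_some_complement
  using complement_dim_unique[OF assms(1) someI[of "is_complement scale A B", OF C] C] .

lemma independent_finite_modulo:
  assumes B: "subspace B" and fin: "fin_codim scale A B"
    and S: "S \<subseteq> A" "independent S" "span S \<inter> B = {0}"
  shows "finite S"
proof -
  interpret P: vector_space_pair scale scale ..
  obtain T where T: "finite T" "A \<subseteq> {x + y | x y. x \<in> span T \<and> y \<in> B}"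
    using fin unfolding fin_codim_def by blast
  have "span S \<subseteq> {x + y | x y. x \<in> span T \<and> y \<in> B}"
    by (rule span_minimal[OF order_trans[OF S(1) T(2)] subspace_sums[OF subspace_span B]])
  then obtain G where G: "Vector_Spaces.linear scale scale G" "inj_on G (span S)"
    "G ` span S \<subseteq> span T"
    by (rule linear_embedding_modulo[OF B subspace_span subspace_span S(3)])
  have "independent (G ` S)"
    using P.linear_independent_injective_image[OF G(1) S(2) G(2)] .
  moreover have "G ` S \<subseteq> span T"
    by (meson G(3) image_mono span_superset subset_trans)
  ultimately have "finite (G ` S)"
    using independent_span_bound[OF T(1)] by simp
  then show ?thesis
    by (rule finite_imageD[OF _ inj_on_subset[OF G(2) span_superset]])
qed

lemma dim_direct_sum:
  assumes S1: "independent S1" "finite S1" and S2: "independent S2" "finite S2"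
    and trivial: "span S1 \<inter> span S2 = {0}"
  shows "dim {x + y | x y. x \<in> span S1 \<and> y \<in> span S2} = card S1 + card S2"
proof -
  have disjoint: "S1 \<inter> S2 = {}"
  proof (rule ccontr)
    assume "S1 \<inter> S2 \<noteq> {}"
    then obtain x where x: "x \<in> S1" "x \<in> S2" by blast
    then have "x = 0" using trivial span_base by blast
    then show False using x(1) S1(1) dependent_zero by blast
  qed
  have "independent (S1 \<union> S2)"
  proof
    assume "dependent (S1 \<union> S2)"
    then obtain u v where v: "v \<in> S1 \<union> S2" "u v \<noteq> 0"
      and u: "(\<Sum>w\<in>S1 \<union> S2. scale (u w) w) = 0"
      using dependent_finite[of "S1 \<union> S2"] S1(2) S2(2) by blast
    define x where "x = (\<Sum>w\<in>S1. scale (u w) w)"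
    have "x + (\<Sum>w\<in>S2. scale (u w) w) = 0"
      using u unfolding x_def sum.union_disjoint[OF S1(2) S2(2) disjoint] .
    then have x_neg: "x = - (\<Sum>w\<in>S2. scale (u w) w)"
      by (simp add: eq_neg_iff_add_eq_0)
    have "x \<in> span S1" unfolding x_def by (intro span_sum span_scale span_base)
    moreover have "x \<in> span S2" unfolding x_neg by (intro span_neg span_sum span_scale span_base)
    ultimately have "x = 0" using trivial by blast
    then have "(\<Sum>w\<in>S1. scale (u w) w) = 0" "(\<Sum>w\<in>S2. scale (u w) w) = 0"
      using x_neg unfolding x_def by simp_all
    then show False
      using v independentD[OF S1(1) S1(2) order_refl] independentD[OF S2(1) S2(2) order_refl]
      by blast
  qed
  then have "dim (span (S1 \<union> S2)) = card (S1 \<union> S2)"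
    by (rule dim_span_eq_card_independent)
  then show ?thesis
    using card_Un_disjoint[OF S1(2) S2(2) disjoint] unfolding span_Un by simp
qed

lemma is_complement_sums:
  assumes A: "subspace A" and B: "subspace B" and C: "subspace C"
    and C_B: "C \<subseteq> B" and B_A: "B \<subseteq> A"
    and D1: "is_complement scale B C D1" and D2: "is_complement scale A B D2"
  shows "is_complement scale A C {x + y | x y. x \<in> D1 \<and> y \<in> D2}"
proof -
  have D1': "subspace D1" "D1 \<subseteq> B" "D1 \<inter> C = {0}" "B \<subseteq> {d + c | d c. d \<in> D1 \<and> c \<in> B \<inter> C}"
    using D1 unfolding is_complement_def by simp_all
  have D2': "subspace D2" "D2 \<subseteq> A" "D2 \<inter> B = {0}" "A \<subseteq> {d + b | d b. d \<in> D2 \<and> b \<in> A \<inter> B}"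
    using D2 unfolding is_complement_def by simp_all
  let ?D = "{x + y | x y. x \<in> D1 \<and> y \<in> D2}"
  have D_A: "?D \<subseteq> A"
  proof
    fix z assume "z \<in> ?D"
    then obtain x y where xy: "z = x + y" "x \<in> D1" "y \<in> D2" by (rule sumsE)
    then have "x \<in> A" "y \<in> A" using D1'(2) D2'(2) B_A by auto
    then show "z \<in> A" using xy(1) subspace_add[OF A] by simp
  qed
  moreover have D_C: "?D \<inter> C = {0}"
  proof
    show "?D \<inter> C \<subseteq> {0}"
    proof
      fix z assume z: "z \<in> ?D \<inter> C"
      then have "z \<in> ?D" by simp
      then obtain x y where xy: "z = x + y" "x \<in> D1" "y \<in> D2" by (rule sumsE)
      have "y = z - x" using xy(1) by simp
      then have "y \<in> B" using z C_B D1'(2) xy(2) subspace_diff[OF B] by auto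
      then have y0: "y = 0" using xy(3) D2'(3) by auto
      then have "x \<in> D1 \<inter> C" using z xy(1,2) by simp
      then show "z \<in> {0}" using D1'(3) xy(1) y0 by simp
    qed
    have "0 + 0 \<in> ?D" using subspace_0[OF D1'(1)] subspace_0[OF D2'(1)] by (rule sumsI[OF refl])
    then show "{0} \<subseteq> ?D \<inter> C" using subspace_0[OF C] by simp
  qed
  moreover have cover: "A \<subseteq> {d + c | d c. d \<in> ?D \<and> c \<in> A \<inter> C}"
  proof
    fix a assume "a \<in> A"
    then have "a \<in> {d + b | d b. d \<in> D2 \<and> b \<in> A \<inter> B}" using D2'(4) by (rule rev_subsetD)
    then obtain d2 b where d2b: "a = d2 + b" "d2 \<in> D2" "b \<in> A \<inter> B" by (rule sumsE)
    then have "b \<in> B" by simp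
    then have "b \<in> {d + c | d c. d \<in> D1 \<and> c \<in> B \<inter> C}" using D1'(4) by (rule rev_subsetD)
    then obtain d1 c where d1c: "b = d1 + c" "d1 \<in> D1" "c \<in> B \<inter> C" by (rule sumsE)
    have "a = (d1 + d2) + c" using d2b(1) d1c(1) by (simp add: algebra_simps)
    moreover have "d1 + d2 \<in> ?D" using d1c(2) d2b(2) by (rule sumsI[OF refl])
    moreover have "c \<in> A \<inter> C" using d1c(3) B_A by auto
    ultimately show "a \<in> {d + c | d c. d \<in> ?D \<and> c \<in> A \<inter> C}" by (rule sumsI)
  qed
  ultimately show ?thesis
    unfolding is_complement_def by (intro conjI subspace_sums[OF D1'(1) D2'(1)])
qed

lemma quot_dim_add:
  assumes A: "subspace A" and B: "subspace B" and C: "subspace C"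
    and C_B: "C \<subseteq> B" and B_A: "B \<subseteq> A" and fin: "fin_codim scale A C"
  shows "quot_dim scale A C = quot_dim scale A B + quot_dim scale B C"
proof -
  obtain D1 where D1: "is_complement scale B C D1" using complement_exists[OF B C] .
  obtain D2 where D2: "is_complement scale A B D2" using complement_exists[OF A B] .
  have D1': "subspace D1" "D1 \<subseteq> B" "D1 \<inter> C = {0}"
    using D1 unfolding is_complement_def by simp_all
  have D2': "subspace D2" "D2 \<subseteq> A" "D2 \<inter> B = {0}"
    using D2 unfolding is_complement_def by simp_all
  obtain S1 where S1: "S1 \<subseteq> D1" "independent S1" "D1 \<subseteq> span S1" "card S1 = dim D1"
    by (rule basis_exists)
  obtain S2 where S2: "S2 \<subseteq> D2" "independent S2" "D2 \<subseteq> span S2" "card S2 = dim D2"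
    by (rule basis_exists)
  have span_S1: "span S1 = D1" using span_subspace[OF S1(1,3) D1'(1)] .
  have span_S2: "span S2 = D2" using span_subspace[OF S2(1,3) D2'(1)] .
  have "finite S1"
    using independent_finite_modulo[OF C fin_codim_mono[OF fin B_A order_refl], of S1]
      S1(1,2) D1'(2,3) unfolding span_S1 by auto
  moreover have "finite S2"
    using independent_finite_modulo[OF B fin_codim_mono[OF fin order_refl C_B], of S2]
      S2(1,2) D2'(2,3) unfolding span_S2 by auto
  moreover have "span S1 \<inter> span S2 = {0}"
    using D1'(2) D2'(3) subspace_0[OF D1'(1)] subspace_0[OF D2'(1)]
    unfolding span_S1 span_S2 by auto
  ultimately have "dim {x + y | x y. x \<in> D1 \<and> y \<in> D2} = dim D1 + dim D2"
    using dim_direct_sum[OF S1(2) _ S2(2)] S1(4) S2(4) unfolding span_S1 span_S2 by simp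
  then show ?thesis
    using quot_dim_complement[OF C is_complement_sums[OF A B C C_B B_A D1 D2]]
      quot_dim_complement[OF B D2] quot_dim_complement[OF C D1] by simp
qed

end

context vector_space_pair
begin

lemma quot_dim_linear_image:
  assumes h: "Vector_Spaces.linear s1 s2 h" and A: "vs1.subspace A"
    and B': "vs2.subspace B'" and B'_A': "B' \<subseteq> A'" and hA: "h ` A \<subseteq> A'"
    and cover: "A' \<subseteq> {x + y | x y. x \<in> h ` A \<and> y \<in> B'}"
  shows "quot_dim s2 A' B' = quot_dim s1 A {a \<in> A. h a \<in> B'}"
proof -
  let ?K = "{a \<in> A. h a \<in> B'}"
  have "?K = A \<inter> {a. h a \<in> B'}" by blast
  then have K: "vs1.subspace ?K"
    using vs1.subspace_inter[OF A linear_subspace_linear_preimage[OF h B']] by simp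
  obtain C where C: "is_complement s1 A ?K C" using vs1.complement_exists[OF A K] .
  have C': "vs1.subspace C" "C \<subseteq> A" "C \<inter> ?K = {0}"
    "A \<subseteq> {c + k | c k. c \<in> C \<and> k \<in> A \<inter> ?K}"
    using C unfolding is_complement_def by simp_all
  have h0: "h 0 = 0" by (rule linear_0[OF h])
  have kernel: "x = 0" if "x \<in> C" "h x \<in> B'" for x
  proof -
    have "x \<in> C \<inter> ?K" using that C'(2) by blast
    then show ?thesis using C'(3) by simp
  qed
  have inj: "inj_on h C"
    unfolding linear_inj_on_iff_eq_0[OF h C'(1)]
    using kernel vs2.subspace_0[OF B'] by simp
  have hC_B': "h ` C \<inter> B' = {0}"
  proof
    show "h ` C \<inter> B' \<subseteq> {0}" using kernel h0 by blast
    have "h 0 \<in> h ` C" by (rule imageI[OF vs1.subspace_0[OF C'(1)]])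
    then show "{0} \<subseteq> h ` C \<inter> B'" using h0 vs2.subspace_0[OF B'] by simp
  qed
  have cover': "A' \<subseteq> {c + b | c b. c \<in> h ` C \<and> b \<in> A' \<inter> B'}"
  proof
    fix y assume "y \<in> A'"
    then have "y \<in> {x + y | x y. x \<in> h ` A \<and> y \<in> B'}" using cover by (rule rev_subsetD)
    then obtain x b where xb: "y = x + b" "x \<in> h ` A" "b \<in> B'" by (rule sumsE)
    from xb(2) obtain a where a: "x = h a" "a \<in> A" by (rule imageE)
    from a(2) have "a \<in> {c + k | c k. c \<in> C \<and> k \<in> A \<inter> ?K}" using C'(4) by (rule rev_subsetD)
    then obtain c k where ck: "a = c + k" "c \<in> C" "k \<in> A \<inter> ?K" by (rule sumsE)
    have "y = h c + (h k + b)"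
      using xb(1) a(1) ck(1) linear_add[OF h] by (simp add: algebra_simps)
    moreover have "h c \<in> h ` C" using ck(2) by (rule imageI)
    moreover have "h k + b \<in> A' \<inter> B'"
      using vs2.subspace_add[OF B'] ck(3) xb(3) B'_A' by auto
    ultimately show "y \<in> {c + b | c b. c \<in> h ` C \<and> b \<in> A' \<inter> B'}" by (rule sumsI)
  qed
  have "h ` C \<subseteq> A'" using hA C'(2) by auto
  then have "is_complement s2 A' B' (h ` C)"
    unfolding is_complement_def
    by (intro conjI linear_subspace_image[OF h C'(1)] hC_B' cover')
  then show ?thesis
    using vs2.quot_dim_complement[OF B'] vs1.quot_dim_complement[OF K C]
      dim_image_inj_on[OF h C'(1) inj] by simp
qed

end

context vector_space
begin

lemma quot_dim_sums:
  assumes X: "subspace X" and Y: "subspace Y"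
  shows "quot_dim scale {x + y | x y. x \<in> X \<and> y \<in> Y} Y = quot_dim scale X Y"
proof -
  interpret P: vector_space_pair scale scale ..
  have "Y \<subseteq> {x + y | x y. x \<in> X \<and> y \<in> Y}"
    using subspace_0[OF X] by force
  moreover have "id ` X \<subseteq> {x + y | x y. x \<in> X \<and> y \<in> Y}"
    using subspace_0[OF Y] by force
  ultimately have "quot_dim scale {x + y | x y. x \<in> X \<and> y \<in> Y} Y = quot_dim scale X (X \<inter> Y)"
    using P.quot_dim_linear_image[OF linear_id X Y] by (simp add: Int_def)
  then show ?thesis using quot_dim_Int by metis
qed

end

lemma leibniz_algebra_vector_space: "leibniz_algebra sc br \<Longrightarrow> vector_space sc"
  unfolding leibniz_algebra_def by simp

lemma leibniz_algebra_linear_left: "leibniz_algebra sc br \<Longrightarrow> Vector_Spaces.linear sc sc (\<lambda>x. br x y)"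
  unfolding leibniz_algebra_def Vector_Spaces.linear_iff by simp

lemma leibniz_algebra_linear_right: "leibniz_algebra sc br \<Longrightarrow> Vector_Spaces.linear sc sc (\<lambda>y. br x y)"
  unfolding leibniz_algebra_def Vector_Spaces.linear_iff by simp

lemma leibniz_bracket_add:
  assumes "leibniz_algebra sc br"
  shows "br (x + y) z = br x z + br y z" and "br x (y + z) = br x y + br x z"
  using assms unfolding leibniz_algebra_def by simp_all

lemma leibniz_bracket_zero:
  assumes "leibniz_algebra sc br"
  shows "br 0 y = 0" and "br y 0 = 0"
proof -
  interpret vector_space sc using leibniz_algebra_vector_space[OF assms] .
  interpret vector_space_pair sc sc ..
  show "br 0 y = 0" using linear_0[OF leibniz_algebra_linear_left[OF assms]] .
  show "br y 0 = 0" using linear_0[OF leibniz_algebra_linear_right[OF assms]] .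
qed

lemma two_sided_ideal_zero:
  assumes "leibniz_algebra sc br"
  shows "two_sided_ideal sc br {0}"
proof -
  interpret vector_space sc using leibniz_algebra_vector_space[OF assms] .
  show ?thesis
    unfolding two_sided_ideal_def by (simp add: leibniz_bracket_zero[OF assms])
qed

lemma two_sided_ideal_vimage:
  assumes L1: "leibniz_algebra sc1 br1" and L2: "leibniz_algebra sc2 br2"
    and h: "leibniz_hom sc1 br1 sc2 br2 h" and I: "two_sided_ideal sc2 br2 I"
  shows "two_sided_ideal sc1 br1 (h -` I)"
proof -
  interpret V1: vector_space sc1 using leibniz_algebra_vector_space[OF L1] .
  interpret V2: vector_space sc2 using leibniz_algebra_vector_space[OF L2] .
  interpret vector_space_pair sc1 sc2 ..
  show ?thesis
    using I linear_subspace_vimage[of h I] h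
    unfolding two_sided_ideal_def leibniz_hom_def by simp
qed

lemma sym_bracket_mem_lie_comm:
  "vector_space sc \<Longrightarrow> m \<in> M \<Longrightarrow> n \<in> N \<Longrightarrow> br m n + br n m \<in> lie_comm sc br M N"
  unfolding lie_comm_def module_iff_vector_space[symmetric] by (rule module.span_base) blast+

lemma lie_comm_subspace: "vector_space sc \<Longrightarrow> module.subspace sc (lie_comm sc br M N)"
  unfolding lie_comm_def module_iff_vector_space[symmetric] by (rule module.subspace_span)

lemma lie_comm_mono:
  "vector_space sc \<Longrightarrow> M \<subseteq> M' \<Longrightarrow> N \<subseteq> N' \<Longrightarrow> lie_comm sc br M N \<subseteq> lie_comm sc br M' N'"
  unfolding lie_comm_def module_iff_vector_space[symmetric] by (rule module.span_mono) blast+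

lemma lie_comm_UNIV_subset_ideal:
  assumes L: "leibniz_algebra sc br" and I: "two_sided_ideal sc br I"
  shows "lie_comm sc br UNIV I \<subseteq> I"
proof -
  interpret vector_space sc using leibniz_algebra_vector_space[OF L] .
  have "subspace I" and closed: "\<forall>x\<in>I. \<forall>y. br x y \<in> I \<and> br y x \<in> I"
    using I unfolding two_sided_ideal_def by simp_all
  moreover have "{br m n + br n m | m n. m \<in> UNIV \<and> n \<in> I} \<subseteq> I"
    using closed subspace_add[OF \<open>subspace I\<close>] by blast
  ultimately show ?thesis
    unfolding lie_comm_def by (intro span_minimal)
qed

lemma lie_comm_UNIV_sums:
  assumes L: "leibniz_algebra sc br" and T: "T \<subseteq> {x + y | x y. x \<in> P \<and> y \<in> Q}"
  shows "lie_comm sc br UNIV T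
    \<subseteq> {x + y | x y. x \<in> lie_comm sc br UNIV P \<and> y \<in> lie_comm sc br UNIV Q}"
proof -
  have V: "vector_space sc" using leibniz_algebra_vector_space[OF L] .
  interpret vector_space sc using V .
  let ?W = "{x + y | x y. x \<in> lie_comm sc br UNIV P \<and> y \<in> lie_comm sc br UNIV Q}"
  have "br m t + br t m \<in> ?W" if "t \<in> T" for m t
  proof -
    from T that have "t \<in> {x + y | x y. x \<in> P \<and> y \<in> Q}" by (rule subsetD)
    then obtain p q where pq: "t = p + q" "p \<in> P" "q \<in> Q" by (rule sumsE)
    have "br m t + br t m = (br m p + br p m) + (br m q + br q m)"
      unfolding pq(1) leibniz_bracket_add[OF L] by (simp add: algebra_simps)
    moreover have "br m p + br p m \<in> lie_comm sc br UNIV P"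
      using sym_bracket_mem_lie_comm[OF V _ pq(2)] by simp
    moreover have "br m q + br q m \<in> lie_comm sc br UNIV Q"
      using sym_bracket_mem_lie_comm[OF V _ pq(3)] by simp
    ultimately show ?thesis by (rule sumsI)
  qed
  then have "{br m t + br t m | m t. m \<in> UNIV \<and> t \<in> T} \<subseteq> ?W" by blast
  then show ?thesis
    unfolding lie_comm_def[of sc br UNIV T]
    using subspace_sums[OF lie_comm_subspace[OF V] lie_comm_subspace[OF V]]
    by (rule span_minimal)
qed

lemma lie_comm_image:
  assumes L1: "leibniz_algebra sc1 br1" and L2: "leibniz_algebra sc2 br2"
    and h: "leibniz_hom sc1 br1 sc2 br2 h"
  shows "h ` lie_comm sc1 br1 M N = lie_comm sc2 br2 (h ` M) (h ` N)"
proof -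
  interpret V1: vector_space sc1 using leibniz_algebra_vector_space[OF L1] .
  interpret V2: vector_space sc2 using leibniz_algebra_vector_space[OF L2] .
  interpret vector_space_pair sc1 sc2 ..
  have lin: "Vector_Spaces.linear sc1 sc2 h" using h unfolding leibniz_hom_def by simp
  have sym: "h (br1 m n + br1 n m) = br2 (h m) (h n) + br2 (h n) (h m)" for m n
    using h linear_add[OF lin] unfolding leibniz_hom_def by simp
  have "h ` {br1 m n + br1 n m | m n. m \<in> M \<and> n \<in> N}
      = {h (br1 m n + br1 n m) | m n. m \<in> M \<and> n \<in> N}"
    by blast
  also have "\<dots> = {br2 m n + br2 n m | m n. m \<in> h ` M \<and> n \<in> h ` N}"
    unfolding sym by blast
  finally have "h ` {br1 m n + br1 n m | m n. m \<in> M \<and> n \<in> N}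
      = {br2 m n + br2 n m | m n. m \<in> h ` M \<and> n \<in> h ` N}" .
  then show ?thesis
    unfolding lie_comm_def linear_span_image[OF lin, symmetric] by simp
qed

lemma sym_bracket_mem_span:
  assumes L: "leibniz_algebra sc br" and a: "a \<in> module.span sc G" and b: "b \<in> module.span sc G"
  shows "br a b + br b a \<in> module.span sc ((\<lambda>(x, y). br x y + br y x) ` (G \<times> G))"
proof -
  interpret vector_space sc using leibniz_algebra_vector_space[OF L] .
  interpret vector_space_pair sc sc ..
  let ?S = "(\<lambda>(x, y). br x y + br y x) ` (G \<times> G)"
  have span_linear: "f x \<in> span ?S"
    if f: "Vector_Spaces.linear sc sc f" and fG: "f ` G \<subseteq> span ?S" and x: "x \<in> span G" for f x
  proof -
    have "f x \<in> span (f ` G)" using linear_span_image[OF f, of G] x by simp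
    also have "span (f ` G) \<subseteq> span ?S" by (rule span_minimal[OF fG subspace_span])
    finally show ?thesis .
  qed
  have lin: "Vector_Spaces.linear sc sc (\<lambda>x. br x y + br y x)"
    and lin': "Vector_Spaces.linear sc sc (\<lambda>y. br x y + br y x)" for x y
    using linear_compose_add[OF leibniz_algebra_linear_left[OF L] leibniz_algebra_linear_right[OF L]]
      linear_compose_add[OF leibniz_algebra_linear_right[OF L] leibniz_algebra_linear_left[OF L]]
    by simp_all
  have "br x y + br y x \<in> ?S" if "x \<in> G" "y \<in> G" for x y
    using that by (intro image_eqI[where x="(x, y)"]) auto
  then have "br x y + br y x \<in> span ?S" if "x \<in> span G" "y \<in> G" for x y
    using span_linear[OF lin _ that(1)] that(2) span_base by (simp add: image_subset_iff)
  then show ?thesis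
    using span_linear[OF lin' _ b] a by (simp add: image_subset_iff)
qed

lemma lie_comm_UNIV_UNIV_subset:
  assumes L: "leibniz_algebra sc br" and lift: "\<forall>x. \<exists>l\<in>module.span sc G. x - l \<in> R"
  shows "lie_comm sc br UNIV UNIV
    \<subseteq> {x + y | x y. x \<in> module.span sc ((\<lambda>(a, b). br a b + br b a) ` (G \<times> G))
                 \<and> y \<in> lie_comm sc br UNIV R}"
proof -
  have V: "vector_space sc" using leibniz_algebra_vector_space[OF L] .
  interpret vector_space sc using V .
  let ?S = "(\<lambda>(a, b). br a b + br b a) ` (G \<times> G)"
  let ?W = "{x + y | x y. x \<in> span ?S \<and> y \<in> lie_comm sc br UNIV R}"
  have "br m n + br n m \<in> ?W" for m n
  proof -
    obtain l1 l2 where l: "l1 \<in> span G" "l2 \<in> span G" "m - l1 \<in> R" "n - l2 \<in> R"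
      using lift by meson
    define r1 r2 where "r1 = m - l1" and "r2 = n - l2"
    have "br m n + br n m = br (l1 + r1) (l2 + r2) + br (l2 + r2) (l1 + r1)"
      unfolding r1_def r2_def by simp
    also have "\<dots> = (br l1 l2 + br l2 l1)
        + ((br l1 r2 + br r2 l1) + (br l2 r1 + br r1 l2) + (br r1 r2 + br r2 r1))"
      by (simp add: leibniz_bracket_add[OF L] algebra_simps)
    finally have "br m n + br n m = (br l1 l2 + br l2 l1)
        + ((br l1 r2 + br r2 l1) + (br l2 r1 + br r1 l2) + (br r1 r2 + br r2 r1))" .
    moreover have "br l1 l2 + br l2 l1 \<in> span ?S"
      using sym_bracket_mem_span[OF L l(1,2)] .
    moreover have "(br l1 r2 + br r2 l1) + (br l2 r1 + br r1 l2) + (br r1 r2 + br r2 r1)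
        \<in> lie_comm sc br UNIV R"
      using l(3,4) subspace_add[OF lie_comm_subspace[OF V]]
        sym_bracket_mem_lie_comm[OF V, of _ UNIV _ R br] unfolding r1_def r2_def by simp
    ultimately show ?thesis by (rule sumsI)
  qed
  then have "{br m n + br n m | m n. m \<in> UNIV \<and> n \<in> UNIV} \<subseteq> ?W" by blast
  then show ?thesis
    unfolding lie_comm_def[of sc br UNIV UNIV]
    using subspace_sums[OF subspace_span lie_comm_subspace[OF V]] by (rule span_minimal)
qed

lemma fin_codim_lie_comm_kernel:
  assumes f: "leibniz_algebra scf brf" and g: "leibniz_algebra scg brg" and g_fin: "fin_dim scg"
    and h: "leibniz_hom scf brf scg brg \<rho>" and onto: "surj \<rho>"
  shows "fin_codim scf (lie_comm scf brf UNIV UNIV) (lie_comm scf brf UNIV (\<rho> -` {0}))"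
proof -
  interpret F: vector_space scf using leibniz_algebra_vector_space[OF f] .
  interpret G: vector_space scg using leibniz_algebra_vector_space[OF g] .
  interpret vector_space_pair scf scg ..
  have lin: "Vector_Spaces.linear scf scg \<rho>" using h unfolding leibniz_hom_def by simp
  obtain B where B: "finite B" "G.span B = UNIV" using g_fin unfolding fin_dim_def by blast
  define L where "L = inv \<rho> ` B"
  have "\<rho> ` L = B" unfolding L_def image_image surj_f_inv_f[OF onto] by simp
  then have "\<rho> ` F.span L = UNIV" using linear_span_image[OF lin, of L] B(2) by metis
  have "\<exists>l\<in>F.span L. x - l \<in> \<rho> -` {0}" for x
  proof -
    obtain l where "l \<in> F.span L" "\<rho> x = \<rho> l" using \<open>\<rho> ` F.span L = UNIV\<close> by (metis UNIV_I imageE)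
    then show ?thesis using linear_diff[OF lin] by auto
  qed
  then have "lie_comm scf brf UNIV UNIV \<subseteq> {x + y | x y.
      x \<in> F.span ((\<lambda>(a, b). brf a b + brf b a) ` (L \<times> L)) \<and> y \<in> lie_comm scf brf UNIV (\<rho> -` {0})}"
    by (intro lie_comm_UNIV_UNIV_subset[OF f]) blast
  moreover have "finite ((\<lambda>(a, b). brf a b + brf b a) ` (L \<times> L))"
    using B(1) unfolding L_def by simp
  ultimately show ?thesis
    unfolding fin_codim_def by (intro exI conjI)
qed

locale ideal_of_presentation =
  fixes scf :: "'k::field \<Rightarrow> 'f::ab_group_add \<Rightarrow> 'f" and brf :: "'f \<Rightarrow> 'f \<Rightarrow> 'f"
    and scg :: "'k \<Rightarrow> 'g::ab_group_add \<Rightarrow> 'g" and brg :: "'g \<Rightarrow> 'g \<Rightarrow> 'g"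
    and \<rho> :: "'f \<Rightarrow> 'g" and n :: "'g set" and s :: "'f set"
  assumes f: "leibniz_algebra scf brf" and g: "leibniz_algebra scg brg"
    and hom: "leibniz_hom scf brf scg brg \<rho>" and onto: "surj \<rho>"
    and n: "two_sided_ideal scg brg n" and s_n: "\<rho> ` s = n"
begin

sublocale F: vector_space scf using leibniz_algebra_vector_space[OF f] .
sublocale G: vector_space scg using leibniz_algebra_vector_space[OF g] .
sublocale P: vector_space_pair scf scg ..

abbreviation "R \<equiv> \<rho> -` {0}"
abbreviation "T \<equiv> \<rho> -` n"
abbreviation "FF \<equiv> lie_comm scf brf UNIV UNIV"
abbreviation "FR \<equiv> lie_comm scf brf UNIV R"
abbreviation "FS \<equiv> lie_comm scf brf UNIV s"
abbreviation "FT \<equiv> lie_comm scf brf UNIV T"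
abbreviation "GG \<equiv> lie_comm scg brg UNIV UNIV"
abbreviation "GN \<equiv> lie_comm scg brg UNIV n"

lemma linear_\<rho>: "Vector_Spaces.linear scf scg \<rho>"
  using hom unfolding leibniz_hom_def by simp

lemma R_ideal: "two_sided_ideal scf brf R"
  by (rule two_sided_ideal_vimage[OF f g hom two_sided_ideal_zero[OF g]])

lemma T_ideal: "two_sided_ideal scf brf T"
  by (rule two_sided_ideal_vimage[OF f g hom n])

lemma
  shows subspace_R: "F.subspace R" and subspace_T: "F.subspace T"
    and subspace_FF: "F.subspace FF" and subspace_FR: "F.subspace FR"
    and subspace_FS: "F.subspace FS" and subspace_FT: "F.subspace FT"
    and subspace_n: "G.subspace n" and subspace_GN: "G.subspace GN"
  using R_ideal T_ideal n lie_comm_subspace[OF F.vector_space_axioms]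
    lie_comm_subspace[OF G.vector_space_axioms]
  unfolding two_sided_ideal_def by simp_all

lemma
  shows R_subset_T: "R \<subseteq> T" and FR_subset_R: "FR \<subseteq> R" and FT_subset_T: "FT \<subseteq> T"
    and GN_subset_n: "GN \<subseteq> n" and FR_subset_FT: "FR \<subseteq> FT" and FS_subset_FT: "FS \<subseteq> FT"
    and FT_subset_FF: "FT \<subseteq> FF" and GN_subset_GG: "GN \<subseteq> GG"
proof -
  show "R \<subseteq> T" using G.subspace_0[OF subspace_n] by auto
  then show "FR \<subseteq> FT" by (intro lie_comm_mono[OF F.vector_space_axioms]) simp_all
  have "s \<subseteq> T" using s_n by blast
  then show "FS \<subseteq> FT" by (intro lie_comm_mono[OF F.vector_space_axioms]) simp_all
  show "FT \<subseteq> FF" "GN \<subseteq> GG"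
    by (intro lie_comm_mono[OF F.vector_space_axioms] lie_comm_mono[OF G.vector_space_axioms]; simp)+
  show "FR \<subseteq> R" "FT \<subseteq> T" "GN \<subseteq> n"
    using lie_comm_UNIV_subset_ideal[OF f R_ideal] lie_comm_UNIV_subset_ideal[OF f T_ideal]
      lie_comm_UNIV_subset_ideal[OF g n] by simp_all
qed

lemma image_FF: "\<rho> ` FF = GG"
  using lie_comm_image[OF f g hom] onto by simp

lemma image_FT: "\<rho> ` FT = GN"
proof -
  have "\<rho> ` T = n" using onto by (simp add: surj_image_vimage_eq)
  then show ?thesis using lie_comm_image[OF f g hom] onto by simp
qed

lemma FT_subset_sums: "FT \<subseteq> {x + y | x y. x \<in> FS \<and> y \<in> FR}"
proof -
  have "T \<subseteq> {x + y | x y. x \<in> s \<and> y \<in> R}"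
  proof
    fix t assume "t \<in> T"
    then obtain x where x: "x \<in> s" "\<rho> x = \<rho> t" using s_n by (metis imageE vimageE)
    then have "t - x \<in> R" using P.linear_diff[OF linear_\<rho>] by simp
    then show "t \<in> {x + y | x y. x \<in> s \<and> y \<in> R}" using x(1) by (intro sumsI[of t x]) simp_all
  qed
  then show ?thesis by (rule lie_comm_UNIV_sums[OF f])
qed

lemma vimage_GN: "{a \<in> T \<inter> FF. \<rho> a \<in> GN} = {x + y | x y. x \<in> R \<inter> FF \<and> y \<in> FT}"
proof
  show "{a \<in> T \<inter> FF. \<rho> a \<in> GN} \<subseteq> {x + y | x y. x \<in> R \<inter> FF \<and> y \<in> FT}"
  proof
    fix a assume a: "a \<in> {a \<in> T \<inter> FF. \<rho> a \<in> GN}"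
    then obtain l where l: "l \<in> FT" "\<rho> a = \<rho> l"
      using image_FT by (metis (mono_tags) imageE mem_Collect_eq)
    have "a - l \<in> R" using l(2) P.linear_diff[OF linear_\<rho>] by simp
    moreover have "a - l \<in> FF" using a l(1) FT_subset_FF F.subspace_diff[OF subspace_FF] by auto
    ultimately show "a \<in> {x + y | x y. x \<in> R \<inter> FF \<and> y \<in> FT}"
      using l(1) by (intro sumsI[of a "a - l" l]) simp_all
  qed
  show "{x + y | x y. x \<in> R \<inter> FF \<and> y \<in> FT} \<subseteq> {a \<in> T \<inter> FF. \<rho> a \<in> GN}"
  proof
    fix a assume "a \<in> {x + y | x y. x \<in> R \<inter> FF \<and> y \<in> FT}"
    then obtain x y where xy: "a = x + y" "x \<in> R \<inter> FF" "y \<in> FT" by (rule sumsE)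
    have "a \<in> T" using xy R_subset_T FT_subset_T F.subspace_add[OF subspace_T] by auto
    moreover have "a \<in> FF" using xy FT_subset_FF F.subspace_add[OF subspace_FF] by auto
    moreover have "\<rho> a = \<rho> y" using xy(1,2) P.linear_add[OF linear_\<rho>] by simp
    ultimately show "a \<in> {a \<in> T \<inter> FF. \<rho> a \<in> GN}" using xy(3) image_FT by auto
  qed
qed

lemma quot_dim_ideal_GG:
  "quot_dim scg (n \<inter> GG) GN = quot_dim scf (T \<inter> FF) {x + y | x y. x \<in> R \<inter> FF \<and> y \<in> FT}"
proof -
  have "\<rho> ` (T \<inter> FF) \<subseteq> n \<inter> GG" using image_FF by auto
  moreover have "n \<inter> GG \<subseteq> {x + y | x y. x \<in> \<rho> ` (T \<inter> FF) \<and> y \<in> GN}"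
  proof
    fix y assume "y \<in> n \<inter> GG"
    then obtain x where "x \<in> FF" "y = \<rho> x" using image_FF by (metis IntD2 imageE)
    with \<open>y \<in> n \<inter> GG\<close> have "y \<in> \<rho> ` (T \<inter> FF)" by auto
    then show "y \<in> {x + y | x y. x \<in> \<rho> ` (T \<inter> FF) \<and> y \<in> GN}"
      using G.subspace_0[OF subspace_GN] by (intro sumsI[of y y 0]) simp_all
  qed
  moreover have "GN \<subseteq> n \<inter> GG" using GN_subset_n GN_subset_GG by simp
  ultimately show ?thesis
    using P.quot_dim_linear_image[OF linear_\<rho> F.subspace_inter[OF subspace_T subspace_FF]
        subspace_GN]
    unfolding vimage_GN by simp
qed

lemma R_Int_FT: "R \<inter> FT = {x + y | x y. x \<in> R \<inter> FS \<and> y \<in> FR}"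
proof
  show "R \<inter> FT \<subseteq> {x + y | x y. x \<in> R \<inter> FS \<and> y \<in> FR}"
  proof
    fix m assume m: "m \<in> R \<inter> FT"
    then have "m \<in> {x + y | x y. x \<in> FS \<and> y \<in> FR}" using FT_subset_sums by blast
    then obtain x y where xy: "m = x + y" "x \<in> FS" "y \<in> FR" by (rule sumsE)
    have "x = m - y" using xy(1) by simp
    then have "x \<in> R" using m xy(3) FR_subset_R F.subspace_diff[OF subspace_R] by auto
    then show "m \<in> {x + y | x y. x \<in> R \<inter> FS \<and> y \<in> FR}" using xy by (intro sumsI) simp_all
  qed
  show "{x + y | x y. x \<in> R \<inter> FS \<and> y \<in> FR} \<subseteq> R \<inter> FT"
  proof
    fix m assume "m \<in> {x + y | x y. x \<in> R \<inter> FS \<and> y \<in> FR}"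
    then obtain x y where xy: "m = x + y" "x \<in> R \<inter> FS" "y \<in> FR" by (rule sumsE)
    have "x \<in> FT" "y \<in> FT" using xy(2,3) FR_subset_FT FS_subset_FT by auto
    then have "m \<in> FT" using xy(1) F.subspace_add[OF subspace_FT] by simp
    moreover have "m \<in> R" using xy FR_subset_R F.subspace_add[OF subspace_R] by auto
    ultimately show "m \<in> R \<inter> FT" by simp
  qed
qed

theorem schur_lie_dim_ideal_formula:
  assumes fin: "fin_codim scf FF FR"
  shows "schur_lie_dim scf brf T + quot_dim scf (R \<inter> FS) (FR \<inter> FS)
    = schur_lie_dim scf brf R + quot_dim scg (n \<inter> GG) GN"
proof -
  let ?K = "{x + y | x y. x \<in> R \<inter> FF \<and> y \<in> FT}"
  have R_FF: "F.subspace (R \<inter> FF)" by (rule F.subspace_inter[OF subspace_R subspace_FF])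
  have K: "F.subspace ?K" by (rule F.subspace_sums[OF R_FF subspace_FT])
  have "schur_lie_dim scf brf T = quot_dim scf (T \<inter> FF) ?K + quot_dim scf ?K FT"
    unfolding schur_lie_dim_def
  proof (rule F.quot_dim_add[OF F.subspace_inter[OF subspace_T subspace_FF] K subspace_FT])
    show "FT \<subseteq> ?K"
    proof
      fix x assume "x \<in> FT"
      then show "x \<in> ?K" using F.subspace_0[OF R_FF] by (intro sumsI[of x 0 x]) simp_all
    qed
    show "?K \<subseteq> T \<inter> FF" using vimage_GN by blast
    show "fin_codim scf (T \<inter> FF) FT" using fin_codim_mono[OF fin _ FR_subset_FT] by blast
  qed
  moreover have "quot_dim scf ?K FT = quot_dim scf (R \<inter> FF) FT"
    by (rule F.quot_dim_sums[OF R_FF subspace_FT])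
  moreover have "schur_lie_dim scf brf R
      = quot_dim scf (R \<inter> FF) (R \<inter> FT) + quot_dim scf (R \<inter> FT) FR"
    unfolding schur_lie_dim_def
  proof (rule F.quot_dim_add[OF R_FF F.subspace_inter[OF subspace_R subspace_FT] subspace_FR])
    show "FR \<subseteq> R \<inter> FT" "R \<inter> FT \<subseteq> R \<inter> FF"
      using FR_subset_R FR_subset_FT FT_subset_FF by auto
    show "fin_codim scf (R \<inter> FF) FR" using fin_codim_mono[OF fin _ order_refl] by blast
  qed
  moreover have "quot_dim scf (R \<inter> FF) (R \<inter> FT) = quot_dim scf (R \<inter> FF) FT"
  proof -
    have "R \<inter> FF \<inter> FT = R \<inter> FT" using FT_subset_FF by blast
    then show ?thesis using quot_dim_Int[of scf "R \<inter> FF" FT] by simp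
  qed
  moreover have "quot_dim scf (R \<inter> FT) FR = quot_dim scf (R \<inter> FS) (FR \<inter> FS)"
  proof -
    have "quot_dim scf (R \<inter> FT) FR = quot_dim scf (R \<inter> FS) FR"
      unfolding R_Int_FT
      by (rule F.quot_dim_sums[OF F.subspace_inter[OF subspace_R subspace_FS] subspace_FR])
    also have "\<dots> = quot_dim scf (R \<inter> FS) (FR \<inter> FS)"
      using quot_dim_Int[of scf "R \<inter> FS" FR] quot_dim_Int[of scf "R \<inter> FS" "FR \<inter> FS"]
      by (simp add: Int_ac)
    finally show ?thesis .
  qed
  ultimately show ?thesis
    using quot_dim_ideal_GG by simp
qed

end

theorem mainTheorem8:
  fixes scf :: "'k::field \<Rightarrow> 'f::ab_group_add \<Rightarrow> 'f" and brf :: "'f \<Rightarrow> 'f \<Rightarrow> 'f"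
    and scg :: "'k \<Rightarrow> 'g::ab_group_add \<Rightarrow> 'g" and brg :: "'g \<Rightarrow> 'g \<Rightarrow> 'g"
    and \<rho> :: "'f \<Rightarrow> 'g" and n :: "'g set" and s :: "'f set"
  assumes char: "(2::'k) \<noteq> 0"
    and g: "leibniz_algebra scg brg" and gfin: "fin_dim scg"
    and f: "free_leibniz scf brf"
    and hom: "leibniz_hom scf brf scg brg \<rho>" and onto: "surj \<rho>"
    and n: "two_sided_ideal scg brg n"
    and s: "two_sided_ideal scf brf s" and sn: "\<rho> ` s = n"
  shows "schur_lie_dim scf brf (\<rho> -` n)
           + quot_dim scf (\<rho> -` {0} \<inter> lie_comm scf brf UNIV s)
               (lie_comm scf brf UNIV (\<rho> -` {0}) \<inter> lie_comm scf brf UNIV s)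
         = schur_lie_dim scf brf (\<rho> -` {0})
           + quot_dim scg (n \<inter> lie_comm scg brg UNIV UNIV) (lie_comm scg brg UNIV n)"
proof -
  \<comment> \<open>Unused: \<open>char\<close>, \<open>s\<close>, and freeness of \<open>f\<close> beyond the Leibniz identity.\<close>
  have f': "leibniz_algebra scf brf"
    using f unfolding free_leibniz_def free_leibniz_on_def by auto
  interpret ideal_of_presentation scf brf scg brg \<rho> n s
    using f' g hom onto n sn by unfold_locales
  show ?thesis
    by (rule schur_lie_dim_ideal_formula[OF fin_codim_lie_comm_kernel[OF f' g gfin hom onto]])
qed

end
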